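(* Every $1$-perfect orientation of a connected graph has at most one sink.
   Context: An orientation of a graph $G$ is $1$-perfect if for every vertex $v$ the out-neighborhood of $v$ is a clique in $G$. A sink is a vertex of out-degree $0$. *)

theory Defs
  imports Main
begin

definition simple_graph :: "'a set \<Rightarrow> ('a \<Rightarrow> 'a \<Rightarrow> bool) \<Rightarrow> bool" where
  "simple_graph V E \<longleftrightarrow> finite V \<and>
     (\<forall>u v. E u v \<longrightarrow> u \<in> V \<and> v \<in> V) \<and>
     (\<forall>u v. E u v \<longrightarrow> E v u) \<and> (\<forall>v. \<not> E v v)"

definition connected_graph :: "'a set \<Rightarrow> ('a \<Rightarrow> 'a \<Rightarrow> bool) \<Rightarrow> bool" where
  "connected_graph V E \<longleftrightarrow> (\<forall>u\<in>V. \<forall>v\<in>V. (\<lambda>x y. E x y)\<^sup>*\<^sup>* u v)"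

definition orientation :: "'a set \<Rightarrow> ('a \<Rightarrow> 'a \<Rightarrow> bool) \<Rightarrow> ('a \<Rightarrow> 'a \<Rightarrow> bool) \<Rightarrow> bool" where
  "orientation V E D \<longleftrightarrow> (\<forall>u v. D u v \<longrightarrow> E u v) \<and>
     (\<forall>u v. E u v \<longrightarrow> (D u v \<longleftrightarrow> \<not> D v u))"

definition out_nbhd :: "('a \<Rightarrow> 'a \<Rightarrow> bool) \<Rightarrow> 'a \<Rightarrow> 'a set" where
  "out_nbhd D v = {w. D v w}"

definition is_clique :: "('a \<Rightarrow> 'a \<Rightarrow> bool) \<Rightarrow> 'a set \<Rightarrow> bool" where
  "is_clique E S \<longleftrightarrow> (\<forall>u\<in>S. \<forall>w\<in>S. u \<noteq> w \<longrightarrow> E u w)"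

definition one_perfect :: "'a set \<Rightarrow> ('a \<Rightarrow> 'a \<Rightarrow> bool) \<Rightarrow> ('a \<Rightarrow> 'a \<Rightarrow> bool) \<Rightarrow> bool" where
  "one_perfect V E D \<longleftrightarrow> orientation V E D \<and> (\<forall>v\<in>V. is_clique E (out_nbhd D v))"

definition is_sink :: "'a set \<Rightarrow> ('a \<Rightarrow> 'a \<Rightarrow> bool) \<Rightarrow> 'a \<Rightarrow> bool" where
  "is_sink V D v \<longleftrightarrow> v \<in> V \<and> out_nbhd D v = {}"

end

theory Submission
  imports Defs
begin

text \<open>
  Let \<open>t\<close> be a sink. If \<open>y\<^sub>1 \<rightarrow> y\<^sub>0\<close> is an arc, then \<open>y\<^sub>0\<close> is at most as far from \<open>t\<close>
  as \<open>y\<^sub>1\<close>: follow a walk from \<open>y\<^sub>1\<close> to \<open>t\<close>; as long as its edges point backwards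
  we may step back along them, and at the first forward edge \<open>y\<^sub>1 \<rightarrow> y\<^sub>2\<close> both \<open>y\<^sub>0\<close> and
  \<open>y\<^sub>2\<close> are out-neighbours of \<open>y\<^sub>1\<close>, hence adjacent. A second sink \<open>s\<close> is the head of the
  first arc on any walk from \<open>s\<close> to \<open>t\<close>, so it would be strictly closer to \<open>t\<close> than itself.
\<close>

lemma simple_graph_sym:
  assumes "simple_graph V E" and "E u v"
  shows "E v u"
  using assms unfolding simple_graph_def by blast

lemma orientation_arc_edge:
  assumes "orientation V E D" and "D u v"
  shows "E u v"
  using assms unfolding orientation_def by blast

lemma orientation_edge_cases:
  assumes "orientation V E D" and "E u v"
  shows "D u v \<or> D v u"
  using assms by (auto simp: orientation_def)

lemma one_perfect_orientation:
  assumes "one_perfect V E D"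
  shows "orientation V E D"
  using assms by (simp add: one_perfect_def)

lemma one_perfect_out_nbhd_adjacent:
  assumes "simple_graph V E" and "one_perfect V E D"
    and "D v x" and "D v y" and "x \<noteq> y"
  shows "E x y"
proof -
  have "E v x" using orientation_arc_edge[OF one_perfect_orientation[OF assms(2)] assms(3)] .
  then have "v \<in> V" using assms(1) unfolding simple_graph_def by blast
  then show ?thesis
    using assms(2-5) by (auto simp: one_perfect_def is_clique_def out_nbhd_def)
qed

lemma one_perfect_arc_head_closer_to_sink:
  assumes graph: "simple_graph V E" and perfect: "one_perfect V E D"
    and sink: "is_sink V D t"
    and "D y\<^sub>1 y\<^sub>0" and "(E ^^ m) y\<^sub>1 t"
  shows "\<exists>j\<le>m. (E ^^ j) y\<^sub>0 t"
  using assms(4,5)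
proof (induction m arbitrary: y\<^sub>0 y\<^sub>1)
  case 0
  then show ?case using sink by (auto simp: is_sink_def out_nbhd_def)
next
  case (Suc k)
  from Suc.prems(2) obtain y\<^sub>2 where "E y\<^sub>1 y\<^sub>2" and walk: "(E ^^ k) y\<^sub>2 t"
    by (rule relpowp_Suc_E2)
  have orient: "orientation V E D" using one_perfect_orientation[OF perfect] .
  have "E y\<^sub>0 y\<^sub>1"
    using simple_graph_sym[OF graph orientation_arc_edge[OF orient Suc.prems(1)]] .
  consider "D y\<^sub>2 y\<^sub>1" | "D y\<^sub>1 y\<^sub>2"
    using orientation_edge_cases[OF orient \<open>E y\<^sub>1 y\<^sub>2\<close>] by blast
  then show ?case
  proof cases
    case 1
    then obtain j where "j \<le> k" "(E ^^ j) y\<^sub>1 t" using Suc.IH walk by blast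
    then have "(E ^^ Suc j) y\<^sub>0 t" using \<open>E y\<^sub>0 y\<^sub>1\<close> by (blast intro: relpowp_Suc_I2)
    moreover have "Suc j \<le> Suc k" using \<open>j \<le> k\<close> by simp
    ultimately show ?thesis by blast
  next
    case 2
    show ?thesis
    proof (cases "y\<^sub>0 = y\<^sub>2")
      case True
      then show ?thesis using walk le_SucI by blast
    next
      case False
      then have "E y\<^sub>0 y\<^sub>2"
        using one_perfect_out_nbhd_adjacent[OF graph perfect Suc.prems(1) 2] by blast
      then have "(E ^^ Suc k) y\<^sub>0 t" using walk by (rule relpowp_Suc_I2)
      then show ?thesis by blast
    qed
  qed
qed

lemma one_perfect_sinks_joined_by_walk_eq:
  assumes graph: "simple_graph V E" and perfect: "one_perfect V E D"
    and "is_sink V D s" and "is_sink V D t"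
  shows "(E ^^ n) s t \<Longrightarrow> s = t"
proof (induction n rule: less_induct)
  case (less n)
  show ?case
  proof (cases n)
    case 0
    then show ?thesis using less.prems by simp
  next
    case (Suc k)
    from less.prems obtain y where "E s y" and walk: "(E ^^ k) y t"
      unfolding Suc by (rule relpowp_Suc_E2)
    have "\<not> D s y" using \<open>is_sink V D s\<close> by (auto simp: is_sink_def out_nbhd_def)
    then have "D y s"
      using orientation_edge_cases[OF one_perfect_orientation[OF perfect] \<open>E s y\<close>] by blast
    then obtain j where "j \<le> k" "(E ^^ j) s t"
      using one_perfect_arc_head_closer_to_sink[OF graph perfect \<open>is_sink V D t\<close> _ walk] by blast
    then show ?thesis using less.IH Suc by (blast intro: le_imp_less_Suc)
  qed
qed

theorem lemma2p9:
  assumes "simple_graph V E"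
    and "connected_graph V E"
    and "one_perfect V E D"
  shows "card {v. is_sink V D v} \<le> 1"
proof -
  have "finite {v. is_sink V D v}"
    using assms(1) by (auto simp: simple_graph_def is_sink_def intro: finite_subset)
  moreover have "s = t" if "is_sink V D s" and "is_sink V D t" for s t
  proof -
    have "E\<^sup>*\<^sup>* s t" using assms(2) that by (auto simp: connected_graph_def is_sink_def)
    then obtain n where "(E ^^ n) s t" by (auto simp: rtranclp_power)
    then show ?thesis using one_perfect_sinks_joined_by_walk_eq[OF assms(1,3) that] by blast
  qed
  ultimately show ?thesis by (auto simp: card_le_Suc0_iff_eq)
qed

end
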